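(* Let $(H,L_H)$ be a right-resolving labeled graph presenting $Y=L_H(X_H)$, and let $C$ be a component of $H''$ such that $\beta_H(y)$ is backward asymptotic to $X_C$ for some $y\in Y$. Then $X_C \subseteq \overline{\beta_H(Y)}$ (closure in $X_{H''}$).
   Context: A labeled graph $(H,L_H)$: finite directed graph (vertices $V_H$, edges $E_H$, source/terminal maps $s_H,t_H$) without sinks or sources, labeling $L_H:E_H\to A$, edge shift $X_H$. Right-resolving: distinct edges with the same source have distinct labels. Subset construction $(H'',L_{H''})$: vertices are non-empty subsets of $V_H$; for vertices $F,F'$ and $a\in A$ there is an edge from $F$ to $F'$ labeled $a$ when $F\subseteq\{s_H(e): L_H(e)=a\}$ and $F'=\{t_H(e): s_H(e)\in F, L_H(e)=a\}$; the graph is then trimmed by repeatedly removing sinks and sources. For $y\in Y$ ($L_H^{-1}(y)$ is finite), $\beta_H(y)\in X_{H''}$ is the bi-infinite path whose $i$-th edge is the edge labeled $y_i$ from $F_i$ to $F_{i+1}$, where $F_i=\{s_H(k_i): k\in L_H^{-1}(y)\}$. Components: a vertex is recurrent if there is a path from it to itself; recurrent vertices are equivalent if each reaches the other by a path; an equivalence class $C$ is a component and $X_C$ is the edge shift of the subgraph with vertex set $C$ and edges with both endpoints in $C$. $x\in X_{H''}$ is backward asymptotic to $X_C$ if there exist $u\in X_C$ and $N$ with $x_i=u_i$ for all $i\le N$. *)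

theory Defs
  imports "HOL-Analysis.Analysis"
begin

definition finite_graph_no_sinks_sources ::
  "'v set \<Rightarrow> 'e set \<Rightarrow> ('e \<Rightarrow> 'v) \<Rightarrow> ('e \<Rightarrow> 'v) \<Rightarrow> bool" where
  "finite_graph_no_sinks_sources V E s t \<longleftrightarrow>
     finite V \<and> finite E \<and> (\<forall>e\<in>E. s e \<in> V \<and> t e \<in> V) \<and>
     (\<forall>v\<in>V. (\<exists>e\<in>E. s e = v) \<and> (\<exists>e\<in>E. t e = v))"

definition edge_shift :: "'e set \<Rightarrow> ('e \<Rightarrow> 'v) \<Rightarrow> ('e \<Rightarrow> 'v) \<Rightarrow> (int \<Rightarrow> 'e) set" where
  "edge_shift E s t = {x. \<forall>i. x i \<in> E \<and> t (x i) = s (x (i + 1))}"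

definition right_resolving :: "'e set \<Rightarrow> ('e \<Rightarrow> 'v) \<Rightarrow> ('e \<Rightarrow> 'a) \<Rightarrow> bool" where
  "right_resolving E s L \<longleftrightarrow> (\<forall>e\<in>E. \<forall>e'\<in>E. s e = s e' \<and> L e = L e' \<longrightarrow> e = e')"

definition label_shift ::
  "'e set \<Rightarrow> ('e \<Rightarrow> 'v) \<Rightarrow> ('e \<Rightarrow> 'v) \<Rightarrow> ('e \<Rightarrow> 'a) \<Rightarrow> (int \<Rightarrow> 'a) set" where
  "label_shift E s t L = (\<lambda>x. L \<circ> x) ` edge_shift E s t"

text \<open>Subset construction (before trimming).  An edge from F to F' labelled a is
  the triple (F, a, F').\<close>
definition ss_src :: "'v set \<times> 'a \<times> 'v set \<Rightarrow> 'v set" where "ss_src e = fst e"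
definition ss_lab :: "'v set \<times> 'a \<times> 'v set \<Rightarrow> 'a" where "ss_lab e = fst (snd e)"
definition ss_tgt :: "'v set \<times> 'a \<times> 'v set \<Rightarrow> 'v set" where "ss_tgt e = snd (snd e)"

definition subset_verts :: "'v set \<Rightarrow> 'v set set" where
  "subset_verts V = {F. F \<noteq> {} \<and> F \<subseteq> V}"

definition subset_edges ::
  "'v set \<Rightarrow> 'e set \<Rightarrow> ('e \<Rightarrow> 'v) \<Rightarrow> ('e \<Rightarrow> 'v) \<Rightarrow> ('e \<Rightarrow> 'a) \<Rightarrow> ('v set \<times> 'a \<times> 'v set) set" where
  "subset_edges V E s t L =
     {(F, a, F'). F \<in> subset_verts V \<and> F' \<in> subset_verts V \<and>
        F \<subseteq> {s e | e. e \<in> E \<and> L e = a} \<and>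
        F' = {t e | e. e \<in> E \<and> s e \<in> F \<and> L e = a}}"

definition trim_step ::
  "('e \<Rightarrow> 'v) \<Rightarrow> ('e \<Rightarrow> 'v) \<Rightarrow> 'v set \<times> 'e set \<Rightarrow> 'v set \<times> 'e set" where
  "trim_step s t G =
     (let W' = {v \<in> fst G. (\<exists>e\<in>snd G. s e = v) \<and> (\<exists>e\<in>snd G. t e = v)}
      in (W', {e \<in> snd G. s e \<in> W' \<and> t e \<in> W'}))"

definition trimmed ::
  "('e \<Rightarrow> 'v) \<Rightarrow> ('e \<Rightarrow> 'v) \<Rightarrow> 'v set \<Rightarrow> 'e set \<Rightarrow> 'v set \<times> 'e set" where
  "trimmed s t W D =
     ((\<Inter>n. fst ((trim_step s t ^^ n) (W, D))), (\<Inter>n. snd ((trim_step s t ^^ n) (W, D))))"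

definition H2_verts ::
  "'v set \<Rightarrow> 'e set \<Rightarrow> ('e \<Rightarrow> 'v) \<Rightarrow> ('e \<Rightarrow> 'v) \<Rightarrow> ('e \<Rightarrow> 'a) \<Rightarrow> 'v set set" where
  "H2_verts V E s t L = fst (trimmed ss_src ss_tgt (subset_verts V) (subset_edges V E s t L))"

definition H2_edges ::
  "'v set \<Rightarrow> 'e set \<Rightarrow> ('e \<Rightarrow> 'v) \<Rightarrow> ('e \<Rightarrow> 'v) \<Rightarrow> ('e \<Rightarrow> 'a) \<Rightarrow> ('v set \<times> 'a \<times> 'v set) set" where
  "H2_edges V E s t L = snd (trimmed ss_src ss_tgt (subset_verts V) (subset_edges V E s t L))"

definition beta_F ::
  "'e set \<Rightarrow> ('e \<Rightarrow> 'v) \<Rightarrow> ('e \<Rightarrow> 'v) \<Rightarrow> ('e \<Rightarrow> 'a) \<Rightarrow> (int \<Rightarrow> 'a) \<Rightarrow> int \<Rightarrow> 'v set" where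
  "beta_F E s t L y i = {s (k i) | k. k \<in> edge_shift E s t \<and> L \<circ> k = y}"

definition beta ::
  "'e set \<Rightarrow> ('e \<Rightarrow> 'v) \<Rightarrow> ('e \<Rightarrow> 'v) \<Rightarrow> ('e \<Rightarrow> 'a) \<Rightarrow> (int \<Rightarrow> 'a) \<Rightarrow> int \<Rightarrow> 'v set \<times> 'a \<times> 'v set" where
  "beta E s t L y = (\<lambda>i. (beta_F E s t L y i, y i, beta_F E s t L y (i + 1)))"

definition edge_rel :: "'e set \<Rightarrow> ('e \<Rightarrow> 'v) \<Rightarrow> ('e \<Rightarrow> 'v) \<Rightarrow> ('v \<times> 'v) set" where
  "edge_rel D s t = {(s e, t e) | e. e \<in> D}"

definition recurrent :: "'e set \<Rightarrow> ('e \<Rightarrow> 'v) \<Rightarrow> ('e \<Rightarrow> 'v) \<Rightarrow> 'v \<Rightarrow> bool" where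
  "recurrent D s t v \<longleftrightarrow> (v, v) \<in> (edge_rel D s t)\<^sup>+"

definition is_component :: "'e set \<Rightarrow> ('e \<Rightarrow> 'v) \<Rightarrow> ('e \<Rightarrow> 'v) \<Rightarrow> 'v set \<Rightarrow> bool" where
  "is_component D s t C \<longleftrightarrow>
     (\<exists>v. recurrent D s t v \<and>
        C = {w. recurrent D s t w \<and> (v, w) \<in> (edge_rel D s t)\<^sup>* \<and> (w, v) \<in> (edge_rel D s t)\<^sup>*})"

definition component_shift ::
  "'e set \<Rightarrow> ('e \<Rightarrow> 'v) \<Rightarrow> ('e \<Rightarrow> 'v) \<Rightarrow> 'v set \<Rightarrow> (int \<Rightarrow> 'e) set" where
  "component_shift D s t C = edge_shift {e \<in> D. s e \<in> C \<and> t e \<in> C} s t"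

definition backward_asymptotic :: "(int \<Rightarrow> 'e) \<Rightarrow> (int \<Rightarrow> 'e) set \<Rightarrow> bool" where
  "backward_asymptotic x X \<longleftrightarrow> (\<exists>u\<in>X. \<exists>N. \<forall>i\<le>N. x i = u i)"

definition shift_closure ::
  "'e set \<Rightarrow> ('e \<Rightarrow> 'v) \<Rightarrow> ('e \<Rightarrow> 'v) \<Rightarrow> (int \<Rightarrow> 'e) set \<Rightarrow> (int \<Rightarrow> 'e) set" where
  "shift_closure D s t S =
     (subtopology (product_topology (\<lambda>_. discrete_topology D) UNIV) (edge_shift D s t)) closure_of S"

end

(*
  Write F_i for the source sets of beta(y), so that F_i lies in C for i <= N.  A point of
  X_C, restricted to [-n, n], spells a word lam which, C being a component, closes up into a
  loop sigma = alpha lam beta v at F_N of the subset construction, where v is a block of y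
  just before N.  Splicing rho sigma into y at N gives a point y' of Y whose beta-path
  follows lam, provided the source set of beta(y') where sigma starts is exactly F_N.
  A vertex lies in a source set iff it carries a left- and a right-infinite labelled path,
  so that source set contains F_N.  Conversely, the window v pushes the vertices reached at
  the end of sigma into the infinite past of y at N (Koenig's lemma), hence into F_N.  In a
  right-resolving graph a word sends each vertex to at most one vertex, so an extra vertex
  would be merged into F_N by sigma and lower the rank |D rho| of the past window D, which
  rho was chosen to minimise among the loops at F_N.
*)

theory Submission
  imports Defs
begin

definition block :: "(int \<Rightarrow> 'a) \<Rightarrow> int \<Rightarrow> nat \<Rightarrow> 'a list" where
  "block y a m = map (\<lambda>i. y (a + int i)) [0..<m]"

lemma length_block [simp]: "length (block y a m) = m"
  by (simp add: block_def)

lemma nth_block [simp]: "i < m \<Longrightarrow> block y a m ! i = y (a + int i)"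
  by (simp add: block_def)

lemma block_Suc: "block y a (Suc m) = block y a m @ [y (a + int m)]"
  by (simp add: block_def)

lemma block_Suc_left: "block y a (Suc m) = y a # block y (a + 1) m"
  by (rule nth_equalityI) (auto simp: nth_Cons' algebra_simps)

lemma take_block: "j \<le> m \<Longrightarrow> take j (block y a m) = block y a j"
  by (rule nth_equalityI) auto

definition splice_at :: "(int \<Rightarrow> 'a) \<Rightarrow> int \<Rightarrow> int \<Rightarrow> 'a list \<Rightarrow> int \<Rightarrow> 'a" where
  "splice_at y N p ws i =
     (if i < p then y (i - p + N)
      else if i < p + int (length ws) then ws ! nat (i - p)
      else y (i - p - int (length ws) + N))"

lemma splice_at_before: "\<forall>i<N. splice_at y N p ws (i + (p - N)) = y i"
  by (simp add: splice_at_def)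

lemma splice_at_after: "\<forall>i\<ge>N. splice_at y N p ws (i + (p + int (length ws) - N)) = y i"
  by (simp add: splice_at_def)

lemma block_splice_at:
  "j + m \<le> length ws \<Longrightarrow> block (splice_at y N p ws) (p + int j) m = take m (drop j ws)"
  by (rule nth_equalityI) (auto simp: splice_at_def nat_add_distrib)

lemma block_splice_at_append:
  "block (splice_at y N p (u @ w @ z)) (p + int (length u)) (length w) = w"
  using block_splice_at[of "length u" "length w" "u @ w @ z" y N p] by simp

lemma glue_sequences:
  fixes v1 v2 :: "int \<Rightarrow> 'v"
  assumes "\<forall>i<j. R i (v1 i) (v1 (i + 1))" "\<forall>i\<ge>j. R i (v2 i) (v2 (i + 1))" "v1 j = v2 j"
  shows "\<exists>v. (\<forall>i\<le>j. v i = v1 i) \<and> (\<forall>i\<ge>j. v i = v2 i) \<and> (\<forall>i. R i (v i) (v (i + 1)))"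
proof (intro exI conjI allI impI)
  let ?v = "\<lambda>i. if i \<le> j then v1 i else v2 i"
  show "?v i = v1 i" if "i \<le> j" for i using that by simp
  show "?v i = v2 i" if "j \<le> i" for i using that assms(3) by auto
  show "R i (?v i) (?v (i + 1))" for i
    using assms(1)[rule_format, of i] assms(2)[rule_format, of i] assms(3)
    by (cases i j rule: linorder_cases) auto
qed

lemma edge_shift_trimmed:
  assumes z: "z \<in> edge_shift D src tgt" and W: "\<forall>i. src (z i) \<in> W"
  shows "z \<in> edge_shift (snd (trimmed src tgt W D)) src tgt"
proof -
  have z_step: "z i \<in> D" "tgt (z i) = src (z (i + 1))" for i
    using z unfolding edge_shift_def by auto
  have "\<forall>i. z i \<in> snd ((trim_step src tgt ^^ n) (W, D)) \<and> src (z i) \<in> fst ((trim_step src tgt ^^ n) (W, D))" for n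
  proof (induction n)
    case 0
    then show ?case using z_step W by simp
  next
    case (Suc n)
    define G where "G = (trim_step src tgt ^^ n) (W, D)"
    have IH: "z i \<in> snd G" "src (z i) \<in> fst G" for i
      using Suc unfolding G_def by auto
    define W' where "W' = {v \<in> fst G. (\<exists>e\<in>snd G. src e = v) \<and> (\<exists>e\<in>snd G. tgt e = v)}"
    have step: "trim_step src tgt G = (W', {e \<in> snd G. src e \<in> W' \<and> tgt e \<in> W'})"
      unfolding trim_step_def W'_def Let_def by simp
    have "src (z i) \<in> W'" for i
      unfolding W'_def using IH[of i] IH[of "i - 1"] z_step(2)[of "i - 1"] by force
    then have "z i \<in> snd (trim_step src tgt G) \<and> src (z i) \<in> fst (trim_step src tgt G)" for i
      unfolding step using IH[of i] z_step(2)[of i] by simp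
    then show ?case
      unfolding G_def by simp
  qed
  then show ?thesis
    using z_step(2) unfolding trimmed_def edge_shift_def by simp
qed

lemma trimmed_edges_subset: "snd (trimmed src tgt W D) \<subseteq> D"
  unfolding trimmed_def by (metis INT_lower UNIV_I funpow_0 snd_conv)

lemma edge_shift_mono: "D \<subseteq> D' \<Longrightarrow> edge_shift D src tgt \<subseteq> edge_shift D' src tgt"
  unfolding edge_shift_def by blast

lemma in_shift_closure_if_approximable:
  assumes w: "w \<in> edge_shift D src tgt"
    and S: "S \<subseteq> edge_shift D src tgt"
    and approx: "\<And>n::nat. \<exists>z\<in>S. \<forall>i. - int n \<le> i \<and> i \<le> int n \<longrightarrow> z i = w i"
  shows "w \<in> shift_closure D src tgt S"
  unfolding shift_closure_def in_closure_of
proof (intro conjI allI impI)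
  let ?X = "product_topology (\<lambda>_. discrete_topology D) (UNIV :: int set)"
  show "w \<in> topspace (subtopology ?X (edge_shift D src tgt))"
    using w by (auto simp: edge_shift_def PiE_iff)
  fix T assume T: "w \<in> T \<and> openin (subtopology ?X (edge_shift D src tgt)) T"
  then obtain T' where T': "openin ?X T'" "T = T' \<inter> edge_shift D src tgt"
    unfolding openin_subtopology by blast
  then obtain U where U: "finite {i. U i \<noteq> D}" "w \<in> Pi\<^sub>E UNIV U" "Pi\<^sub>E UNIV U \<subseteq> T'"
    using T unfolding openin_product_topology_alt by fastforce
  define n where "n = Max (insert 0 ((\<lambda>i. nat \<bar>i\<bar>) ` {i. U i \<noteq> D}))"
  have n: "- int n \<le> i \<and> i \<le> int n" if "U i \<noteq> D" for i
  proof -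
    have "nat \<bar>i\<bar> \<le> n"
      unfolding n_def using U(1) that by (intro Max_ge) auto
    then show ?thesis by linarith
  qed
  obtain z where z: "z \<in> S" "\<forall>i. - int n \<le> i \<and> i \<le> int n \<longrightarrow> z i = w i"
    using approx by blast
  have "z i \<in> U i" for i
  proof (cases "U i = D")
    case True
    then show ?thesis using z(1) S unfolding edge_shift_def by auto
  next
    case False
    then show ?thesis using n[OF False] z(2) U(2) by (auto simp: PiE_iff)
  qed
  then have "z \<in> T"
    using U(3) T'(2) z(1) S by (auto simp: PiE_iff)
  then show "\<exists>y. y \<in> S \<and> y \<in> T"
    using z(1) by blast
qed

lemma component_reachable:
  assumes "is_component D src tgt C" "a \<in> C" "b \<in> C"
  shows "(a, b) \<in> (edge_rel D src tgt)\<^sup>*"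
proof -
  obtain c where "C = {w. recurrent D src tgt w \<and> (c, w) \<in> (edge_rel D src tgt)\<^sup>* \<and> (w, c) \<in> (edge_rel D src tgt)\<^sup>*}"
    using assms(1) unfolding is_component_def by blast
  then show ?thesis
    using assms(2,3) by (blast intro: rtrancl_trans)
qed

lemma component_shift_memD:
  "x \<in> component_shift D src tgt C \<Longrightarrow> x \<in> edge_shift D src tgt \<and> (\<forall>i. src (x i) \<in> C)"
  unfolding component_shift_def edge_shift_def by auto

locale right_resolving_graph =
  fixes V :: "'v set" and E :: "'e set" and s t :: "'e \<Rightarrow> 'v" and L :: "'e \<Rightarrow> 'a"
  assumes graph: "finite_graph_no_sinks_sources V E s t"
    and resolving: "right_resolving E s L"
begin

lemma finite_V: "finite V"
  and edge_ends_in_V: "e \<in> E \<Longrightarrow> s e \<in> V \<and> t e \<in> V"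
  using graph unfolding finite_graph_no_sinks_sources_def by auto

lemma resolving_eq: "e \<in> E \<Longrightarrow> e' \<in> E \<Longrightarrow> s e = s e' \<Longrightarrow> L e = L e' \<Longrightarrow> e = e'"
  using resolving unfolding right_resolving_def by blast

definition has_edge :: "'v \<Rightarrow> 'a \<Rightarrow> 'v \<Rightarrow> bool" where
  "has_edge u a u' \<longleftrightarrow> (\<exists>e\<in>E. s e = u \<and> L e = a \<and> t e = u')"

definition follow :: "'v set \<Rightarrow> 'a \<Rightarrow> 'v set" where
  "follow S a = {t e |e. e \<in> E \<and> s e \<in> S \<and> L e = a}"

definition follow_word :: "'v set \<Rightarrow> 'a list \<Rightarrow> 'v set" where
  "follow_word S w = foldl follow S w"

fun admissible :: "'v set \<Rightarrow> 'a list \<Rightarrow> bool" where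
  "admissible S [] = True"
| "admissible S (a # w) \<longleftrightarrow> S \<subseteq> {s e |e. e \<in> E \<and> L e = a} \<and> admissible (follow S a) w"

lemma follow_iff: "u' \<in> follow S a \<longleftrightarrow> (\<exists>u\<in>S. has_edge u a u')"
  unfolding follow_def has_edge_def by blast

lemma follow_word_Nil [simp]: "follow_word S [] = S"
  and follow_word_Cons [simp]: "follow_word S (a # w) = follow_word (follow S a) w"
  and follow_word_append: "follow_word S (w @ w') = follow_word (follow_word S w) w'"
  by (simp_all add: follow_word_def)

lemma follow_word_snoc: "follow_word S (w @ [a]) = follow (follow_word S w) a"
  by (simp add: follow_word_append)

lemma admissible_append:
  "admissible S (w @ w') \<longleftrightarrow> admissible S w \<and> admissible (follow_word S w) w'"
  by (induction w arbitrary: S) auto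

lemma follow_mono: "S \<subseteq> T \<Longrightarrow> follow S a \<subseteq> follow T a"
  unfolding follow_def by blast

lemma follow_word_mono: "S \<subseteq> T \<Longrightarrow> follow_word S w \<subseteq> follow_word T w"
  by (induction w arbitrary: S T) (simp_all add: follow_mono)

lemma follow_word_UN: "follow_word S w = (\<Union>x\<in>S. follow_word {x} w)"
proof (induction w arbitrary: S)
  case (Cons a w)
  have "follow_word (follow S a) w = (\<Union>z\<in>follow S a. follow_word {z} w)"
    by (rule Cons.IH)
  also have "\<dots> = (\<Union>x\<in>S. \<Union>z\<in>follow {x} a. follow_word {z} w)"
  proof -
    have "follow S a = (\<Union>x\<in>S. follow {x} a)"
      by (auto simp: follow_iff)
    then show ?thesis by (simp only: UN_UN_flatten)
  qed
  also have "\<dots> = (\<Union>x\<in>S. follow_word (follow {x} a) w)"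
    using Cons.IH[of "follow {_} a"] by (simp only:)
  finally show ?case by simp
qed simp

lemma follow_subset_V: "follow S a \<subseteq> V"
  unfolding follow_def using edge_ends_in_V by blast

lemma admissible_follow_word_nonempty:
  "admissible S w \<Longrightarrow> x \<in> S \<Longrightarrow> follow_word {x} w \<noteq> {}"
proof (induction w arbitrary: S x)
  case (Cons a w)
  then obtain e where "e \<in> E" "s e = x" "L e = a" by auto
  then have "t e \<in> follow S a" "{t e} \<subseteq> follow {x} a"
    using Cons.prems(2) unfolding follow_def by blast+
  then show ?case
    using Cons.IH[of "follow S a" "t e"] Cons.prems(1) follow_word_mono[of "{t e}" "follow {x} a" w]
    by auto
qed simp

lemma follow_word_singleton_subsingleton:
  "a \<in> follow_word {x} w \<Longrightarrow> b \<in> follow_word {x} w \<Longrightarrow> a = b"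
proof (induction w arbitrary: x)
  case (Cons c w)
  obtain z where "follow {x} c \<subseteq> {z}"
    unfolding follow_def using resolving_eq by blast
  then have "follow_word {x} (c # w) \<subseteq> follow_word {z} w"
    by (simp add: follow_word_mono)
  then show ?case using Cons by blast
qed simp

lemma follow_word_singleton_subset: "\<exists>z. follow_word {x} w \<subseteq> {z}"
  using follow_word_singleton_subsingleton by blast

lemma card_follow_word_singleton: "card (follow_word {x} w) \<le> 1"
proof -
  obtain z where "follow_word {x} w \<subseteq> {z}"
    using follow_word_singleton_subset by blast
  then show ?thesis
    using card_mono[of "{z}"] by fastforce
qed

lemma finite_follow_word: "finite S \<Longrightarrow> finite (follow_word S w)"
proof -
  have "finite (follow_word {x} w)" for x
    using follow_word_singleton_subset[of x w] finite_subset by blast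
  then show "finite S \<Longrightarrow> finite (follow_word S w)"
    by (subst follow_word_UN) auto
qed

lemma card_follow_word_le: "finite S \<Longrightarrow> card (follow_word S w) \<le> card S"
proof -
  assume "finite S"
  then have "card (follow_word S w) \<le> (\<Sum>x\<in>S. card (follow_word {x} w))"
    by (subst follow_word_UN) (rule card_UN_le)
  also have "\<dots> \<le> (\<Sum>x\<in>S. 1)"
    by (rule sum_mono) (rule card_follow_word_singleton)
  finally show ?thesis by simp
qed

lemma card_follow_word_less:
  assumes "finite A" "T \<subseteq> A" "T \<noteq> {}" "x \<in> A - T"
    and "follow_word {x} w \<subseteq> follow_word T w"
  shows "card (follow_word A w) < card A"
proof -
  obtain f where f: "f \<in> T" "follow_word {x} w \<subseteq> follow_word {f} w"
  proof (cases "follow_word {x} w = {}")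
    case False
    then obtain q where q: "follow_word {x} w = {q}"
      using follow_word_singleton_subset by blast
    then obtain f where "f \<in> T" "q \<in> follow_word {f} w"
      using assms(5) follow_word_UN[of T w] by auto
    then show ?thesis using that[of f] q by simp
  qed (use assms(3) that in blast)
  have "follow_word A w = (\<Union>z\<in>A - {x}. follow_word {z} w) \<union> follow_word {x} w"
    using assms(4) follow_word_UN[of A w] by blast
  also have "\<dots> = follow_word (A - {x}) w"
    using f assms(2,4) follow_word_UN[of "A - {x}" w] by blast
  finally have "card (follow_word A w) \<le> card (A - {x})"
    using card_follow_word_le assms(1) by simp
  also have "\<dots> < card A"
    using assms(1,4) by (meson DiffD1 card_Diff1_less)
  finally show ?thesis .
qed

lemma subset_if_card_follow_word_ge:
  assumes "finite A" "T \<subseteq> A" "T \<noteq> {}" "card A \<le> card (follow_word A w)"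
    and "X \<subseteq> A" "follow_word X w \<subseteq> follow_word T w"
  shows "X \<subseteq> T"
proof
  fix x assume "x \<in> X"
  show "x \<in> T"
  proof (rule ccontr)
    assume "x \<notin> T"
    have "follow_word {x} w \<subseteq> follow_word T w"
      using \<open>x \<in> X\<close> follow_word_mono[of "{x}" X w] assms(6) by blast
    then show False
      using card_follow_word_less[of A T x w] assms \<open>x \<in> X\<close> \<open>x \<notin> T\<close> by auto
  qed
qed

lemma has_edge_unique: "has_edge u a z \<Longrightarrow> has_edge u a z' \<Longrightarrow> z = z'"
  unfolding has_edge_def by (metis resolving_eq)

lemma has_edge_in_V: "has_edge u a z \<Longrightarrow> u \<in> V \<and> z \<in> V"
  unfolding has_edge_def using edge_ends_in_V by blast

lemma vertex_path_iff_edge_path: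
  "(\<forall>i. has_edge (v i) (y i) (v (i + 1))) \<longleftrightarrow>
     (\<exists>k\<in>edge_shift E s t. L \<circ> k = y \<and> (\<forall>i. s (k i) = v i))"
proof
  assume path: "\<forall>i. has_edge (v i) (y i) (v (i + 1))"
  define k where "k i = (SOME e. e \<in> E \<and> s e = v i \<and> L e = y i \<and> t e = v (i + 1))" for i
  have k: "k i \<in> E \<and> s (k i) = v i \<and> L (k i) = y i \<and> t (k i) = v (i + 1)" for i
    unfolding k_def using path[rule_format, of i, unfolded has_edge_def] by (rule someI2_bex) blast
  then have "k \<in> edge_shift E s t"
    unfolding edge_shift_def by simp
  moreover have "L \<circ> k = y"
    using k by (simp add: fun_eq_iff)
  ultimately show "\<exists>k\<in>edge_shift E s t. L \<circ> k = y \<and> (\<forall>i. s (k i) = v i)"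
    using k by blast
next
  assume "\<exists>k\<in>edge_shift E s t. L \<circ> k = y \<and> (\<forall>i. s (k i) = v i)"
  then obtain k where "k \<in> edge_shift E s t" "L \<circ> k = y" "\<forall>i. s (k i) = v i"
    by blast
  then have "k i \<in> E \<and> s (k i) = v i \<and> L (k i) = y i \<and> t (k i) = v (i + 1)" for i
    unfolding edge_shift_def by auto
  then show "\<forall>i. has_edge (v i) (y i) (v (i + 1))"
    unfolding has_edge_def by blast
qed

lemma beta_F_eq_vertex_paths:
  "beta_F E s t L y j = {x. \<exists>v. v j = x \<and> (\<forall>i. has_edge (v i) (y i) (v (i + 1)))}"
proof (intro set_eqI iffI)
  fix x assume "x \<in> beta_F E s t L y j"
  then obtain k where "k \<in> edge_shift E s t" "L \<circ> k = y" "s (k j) = x"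
    unfolding beta_F_def by blast
  moreover have "\<forall>i. has_edge (s (k i)) (y i) (s (k (i + 1)))"
    using vertex_path_iff_edge_path[of "\<lambda>i. s (k i)" y] calculation by blast
  ultimately show "x \<in> {x. \<exists>v. v j = x \<and> (\<forall>i. has_edge (v i) (y i) (v (i + 1)))}"
    by (intro CollectI exI[of _ "\<lambda>i. s (k i)"]) simp
next
  fix x assume "x \<in> {x. \<exists>v. v j = x \<and> (\<forall>i. has_edge (v i) (y i) (v (i + 1)))}"
  then obtain v where "v j = x" "\<forall>i. has_edge (v i) (y i) (v (i + 1))"
    by blast
  then obtain k where "k \<in> edge_shift E s t" "L \<circ> k = y" "s (k j) = x"
    unfolding vertex_path_iff_edge_path by blast
  then show "x \<in> beta_F E s t L y j"
    unfolding beta_F_def by blast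
qed

lemma label_shift_if_beta_F_nonempty:
  "beta_F E s t L y j \<noteq> {} \<Longrightarrow> y \<in> label_shift E s t L"
  unfolding beta_F_def label_shift_def by blast

definition past_vertices :: "(int \<Rightarrow> 'a) \<Rightarrow> int \<Rightarrow> 'v set" where
  "past_vertices y j = {x. \<exists>v. v j = x \<and> (\<forall>i<j. has_edge (v i) (y i) (v (i + 1)))}"

definition future_vertices :: "(int \<Rightarrow> 'a) \<Rightarrow> int \<Rightarrow> 'v set" where
  "future_vertices y j = {x. \<exists>v. v j = x \<and> (\<forall>i\<ge>j. has_edge (v i) (y i) (v (i + 1)))}"

lemma beta_F_eq_past_future:
  "beta_F E s t L y j = past_vertices y j \<inter> future_vertices y j"
proof
  show "beta_F E s t L y j \<subseteq> past_vertices y j \<inter> future_vertices y j"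
    unfolding beta_F_eq_vertex_paths past_vertices_def future_vertices_def by blast
next
  show "past_vertices y j \<inter> future_vertices y j \<subseteq> beta_F E s t L y j"
  proof
    fix x assume "x \<in> past_vertices y j \<inter> future_vertices y j"
    then obtain v1 v2 where "v1 j = x" "\<forall>i<j. has_edge (v1 i) (y i) (v1 (i + 1))"
      "v2 j = x" "\<forall>i\<ge>j. has_edge (v2 i) (y i) (v2 (i + 1))"
      unfolding past_vertices_def future_vertices_def by blast
    then obtain v where "v j = x" "\<forall>i. has_edge (v i) (y i) (v (i + 1))"
      using glue_sequences[of j "\<lambda>i u u'. has_edge u (y i) u'" v1 v2] by auto
    then show "x \<in> beta_F E s t L y j"
      unfolding beta_F_eq_vertex_paths by blast
  qed
qed

lemma past_vertices_shift_subset: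
  assumes "\<forall>i<j. y' (i + d) = y i"
  shows "past_vertices y j \<subseteq> past_vertices y' (j + d)"
proof
  fix x assume "x \<in> past_vertices y j"
  then obtain v where v: "v j = x" "\<forall>i<j. has_edge (v i) (y i) (v (i + 1))"
    unfolding past_vertices_def by blast
  have "has_edge (v (i - d)) (y' i) (v (i - d + 1))" if "i < j + d" for i
    using v(2)[rule_format, of "i - d"] assms[rule_format, of "i - d"] that by simp
  then show "x \<in> past_vertices y' (j + d)"
    unfolding past_vertices_def using v(1) by (intro CollectI exI[of _ "\<lambda>i. v (i - d)"]) (simp add: algebra_simps)
qed

lemma past_vertices_shift:
  assumes "\<forall>i<j. y' (i + d) = y i"
  shows "past_vertices y' (j + d) = past_vertices y j"
proof
  show "past_vertices y j \<subseteq> past_vertices y' (j + d)"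
    using assms by (rule past_vertices_shift_subset)
  have "\<forall>i<j + d. y (i + - d) = y' i"
    using assms by (metis add.commute diff_add_cancel diff_less_eq uminus_add_conv_diff)
  then show "past_vertices y' (j + d) \<subseteq> past_vertices y j"
    using past_vertices_shift_subset[of "j + d" y "- d" y'] by simp
qed

lemma future_vertices_shift_subset:
  assumes "\<forall>i\<ge>j. y' (i + d) = y i"
  shows "future_vertices y j \<subseteq> future_vertices y' (j + d)"
proof
  fix x assume "x \<in> future_vertices y j"
  then obtain v where v: "v j = x" "\<forall>i\<ge>j. has_edge (v i) (y i) (v (i + 1))"
    unfolding future_vertices_def by blast
  have "has_edge (v (i - d)) (y' i) (v (i - d + 1))" if "i \<ge> j + d" for i
    using v(2)[rule_format, of "i - d"] assms[rule_format, of "i - d"] that by simp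
  then show "x \<in> future_vertices y' (j + d)"
    unfolding future_vertices_def using v(1) by (intro CollectI exI[of _ "\<lambda>i. v (i - d)"]) (simp add: algebra_simps)
qed

lemma future_vertices_shift:
  assumes "\<forall>i\<ge>j. y' (i + d) = y i"
  shows "future_vertices y' (j + d) = future_vertices y j"
proof
  show "future_vertices y j \<subseteq> future_vertices y' (j + d)"
    using assms by (rule future_vertices_shift_subset)
  have "\<forall>i\<ge>j + d. y (i + - d) = y' i"
    using assms by (metis add.commute diff_add_cancel le_diff_eq uminus_add_conv_diff)
  then show "future_vertices y' (j + d) \<subseteq> future_vertices y j"
    using future_vertices_shift_subset[of "j + d" y "- d" y'] by simp
qed

lemma follow_past_vertices: "follow (past_vertices y j) (y j) \<subseteq> past_vertices y (j + 1)"
proof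
  fix z assume "z \<in> follow (past_vertices y j) (y j)"
  then obtain v where v: "has_edge (v j) (y j) z" "\<forall>i<j. has_edge (v i) (y i) (v (i + 1))"
    unfolding follow_iff past_vertices_def by blast
  have "\<forall>i<j + 1. has_edge ((v(j + 1 := z)) i) (y i) ((v(j + 1 := z)) (i + 1))"
    using v by (auto simp: less_le)
  then show "z \<in> past_vertices y (j + 1)"
    unfolding past_vertices_def by (intro CollectI exI[of _ "v(j + 1 := z)"]) simp
qed

lemma future_vertices_if_has_edge:
  assumes "has_edge x (y j) z" "z \<in> future_vertices y (j + 1)"
  shows "x \<in> future_vertices y j"
proof -
  obtain v where v: "v (j + 1) = z" "\<forall>i\<ge>j + 1. has_edge (v i) (y i) (v (i + 1))"
    using assms(2) unfolding future_vertices_def by blast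
  have "has_edge ((v(j := x)) i) (y i) ((v(j := x)) (i + 1))" if "i \<ge> j" for i
  proof (cases "i = j")
    case True
    then show ?thesis using v(1) assms(1) by simp
  next
    case False
    then show ?thesis using v(2) that by simp
  qed
  then show ?thesis
    unfolding future_vertices_def by (intro CollectI exI[of _ "v(j := x)"]) simp
qed

lemma follow_word_past_vertices:
  "follow_word (past_vertices y j) (block y j m) \<subseteq> past_vertices y (j + int m)"
proof (induction m)
  case (Suc m)
  have "follow_word (past_vertices y j) (block y j (Suc m))
      \<subseteq> follow (past_vertices y (j + int m)) (y (j + int m))"
    unfolding block_Suc follow_word_snoc using Suc.IH by (rule follow_mono)
  also have "\<dots> \<subseteq> past_vertices y (j + int (Suc m))"
    using follow_past_vertices[of y "j + int m"] by (simp add: ac_simps)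
  finally show ?case .
qed (simp add: block_def)

lemma future_vertices_if_follow_word:
  "follow_word {x} (block y j m) \<inter> future_vertices y (j + int m) \<noteq> {} \<Longrightarrow> x \<in> future_vertices y j"
proof (induction m arbitrary: x j)
  case 0
  then show ?case by (simp add: block_def)
next
  case (Suc m)
  then obtain z where "z \<in> follow {x} (y j)"
    "follow_word {z} (block y (j + 1) m) \<inter> future_vertices y (j + 1 + int m) \<noteq> {}"
    using follow_word_UN[of "follow {x} (y j)"] by (auto simp: block_Suc_left add_ac)
  then show ?case
    using Suc.IH future_vertices_if_has_edge by (auto simp: follow_iff)
qed

lemma path_end_in_follow_word:
  assumes "\<forall>i. a \<le> i \<and> i < a + int m \<longrightarrow> has_edge (v i) (y i) (v (i + 1))"
  shows "v (a + int m) \<in> follow_word {v a} (block y a m)"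
  using assms
proof (induction m)
  case (Suc m)
  have "v (a + int m) \<in> follow_word {v a} (block y a m)"
    using Suc by simp
  moreover have "has_edge (v (a + int m)) (y (a + int m)) (v (a + int m + 1))"
    using Suc.prems by simp
  ultimately show ?case
    unfolding block_Suc follow_word_snoc follow_iff by (auto simp: ac_simps)
qed (simp add: block_def)

lemma beta_F_Suc: "beta_F E s t L y (j + 1) = follow (beta_F E s t L y j) (y j)"
proof
  show "beta_F E s t L y (j + 1) \<subseteq> follow (beta_F E s t L y j) (y j)"
  proof
    fix z assume "z \<in> beta_F E s t L y (j + 1)"
    then obtain v where "v (j + 1) = z" "\<forall>i. has_edge (v i) (y i) (v (i + 1))"
      unfolding beta_F_eq_vertex_paths by blast
    then show "z \<in> follow (beta_F E s t L y j) (y j)"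
      unfolding beta_F_eq_vertex_paths follow_iff by blast
  qed
next
  show "follow (beta_F E s t L y j) (y j) \<subseteq> beta_F E s t L y (j + 1)"
  proof
    fix z assume "z \<in> follow (beta_F E s t L y j) (y j)"
    then obtain v where "has_edge (v j) (y j) z" "\<forall>i. has_edge (v i) (y i) (v (i + 1))"
      unfolding follow_iff beta_F_eq_vertex_paths by blast
    then have "v (j + 1) = z"
      using has_edge_unique by blast
    then show "z \<in> beta_F E s t L y (j + 1)"
      unfolding beta_F_eq_vertex_paths using \<open>\<forall>i. _\<close> by blast
  qed
qed

lemma beta_F_add: "beta_F E s t L y (j + int m) = follow_word (beta_F E s t L y j) (block y j m)"
proof (induction m)
  case (Suc m)
  have "beta_F E s t L y (j + int (Suc m)) = follow (beta_F E s t L y (j + int m)) (y (j + int m))"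
    using beta_F_Suc[of y "j + int m"] by (simp add: ac_simps)
  then show ?case
    unfolding Suc.IH block_Suc follow_word_snoc .
qed (simp add: block_def)

definition past_window :: "(int \<Rightarrow> 'a) \<Rightarrow> int \<Rightarrow> nat \<Rightarrow> 'v set" where
  "past_window y j k = follow_word V (block y (j - int k) k)"

lemma past_window_Suc: "past_window y (j + 1) (Suc k) = follow (past_window y j k) (y j)"
  unfolding past_window_def by (simp add: block_Suc follow_word_snoc)

lemma past_window_Suc_subset: "past_window y j (Suc k) \<subseteq> past_window y j k"
proof -
  have "block y (j - int (Suc k)) (Suc k) = y (j - int (Suc k)) # block y (j - int k) k"
    by (simp add: block_Suc_left)
  then show ?thesis
    unfolding past_window_def by (simp add: follow_word_mono follow_subset_V)
qed

lemma past_window_antimono: "k \<le> k' \<Longrightarrow> past_window y j k' \<subseteq> past_window y j k"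
  by (rule lift_Suc_antimono_le[of "past_window y j"]) (use past_window_Suc_subset in auto)

lemma finite_past_window: "finite (past_window y j k)"
  unfolding past_window_def using finite_V by (rule finite_follow_word)

lemma past_window_stabilizes: "\<exists>k0. \<forall>k. past_window y j k0 \<subseteq> past_window y j k"
proof -
  obtain k0 where k0: "\<And>k. card (past_window y j k0) \<le> card (past_window y j k)"
    using ex_has_least_nat[of "\<lambda>_. True" 0 "\<lambda>k. card (past_window y j k)"] by blast
  have "past_window y j k0 \<subseteq> past_window y j k" for k
  proof (cases "k \<le> k0")
    case True
    then show ?thesis by (rule past_window_antimono)
  next
    case False
    then have sub: "past_window y j k \<subseteq> past_window y j k0"
      by (intro past_window_antimono) simp
    then have "card (past_window y j k) \<le> card (past_window y j k0)"
      by (simp add: card_mono finite_past_window)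
    then have "past_window y j k = past_window y j k0"
      using k0[of k] sub by (intro card_subset_eq finite_past_window) simp_all
    then show ?thesis by simp
  qed
  then show ?thesis by blast
qed

lemma past_vertices_subset_past_window: "past_vertices y j \<subseteq> past_window y j k"
proof
  fix x assume "x \<in> past_vertices y j"
  then obtain v where v: "v j = x" "\<forall>i<j. has_edge (v i) (y i) (v (i + 1))"
    unfolding past_vertices_def by blast
  have "v (j - int k) \<in> V"
    using v(2)[rule_format, of "j - int k - 1"] has_edge_in_V by simp
  moreover have "v (j - int k + int k) \<in> follow_word {v (j - int k)} (block y (j - int k) k)"
    using v(2) by (intro path_end_in_follow_word) simp
  ultimately show "x \<in> past_window y j k"
    unfolding past_window_def using v(1) follow_word_mono[of "{v (j - int k)}" V] by auto
qed

text \<open>Koenig's lemma: the windows decrease in \<open>k\<close>, so among the finitely many predecessors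
  of \<open>x\<close> one lies in all of them.\<close>
lemma past_window_backward:
  assumes x: "\<forall>k. x \<in> past_window y (j + 1) k"
  shows "\<exists>u. has_edge u (y j) x \<and> (\<forall>k. u \<in> past_window y j k)"
proof (rule ccontr)
  assume none: "\<not> ?thesis"
  define U where "U = {u \<in> V. has_edge u (y j) x}"
  have "finite U"
    unfolding U_def using finite_V by simp
  have "\<exists>u\<in>U. u \<in> past_window y j k" for k
  proof -
    have "x \<in> follow (past_window y j k) (y j)"
      using x[rule_format, of "Suc k"] past_window_Suc[of y j k] by simp
    then show ?thesis
      unfolding U_def follow_iff using has_edge_in_V by blast
  qed
  moreover have "\<forall>u\<in>U. \<exists>k. u \<notin> past_window y j k"
  proof
    fix u assume "u \<in> U"
    then have "has_edge u (y j) x"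
      unfolding U_def by simp
    with none show "\<exists>k. u \<notin> past_window y j k"
      by blast
  qed
  then obtain f where f: "\<forall>u\<in>U. u \<notin> past_window y j (f u)"
    by (rule bchoice[THEN exE])
  ultimately obtain u where u: "u \<in> U" "u \<in> past_window y j (Max (f ` U))"
    by blast
  then have "u \<in> past_window y j (f u)"
    using past_window_antimono[of "f u" "Max (f ` U)"] \<open>finite U\<close> by auto
  then show False
    using f u(1) by blast
qed

lemma past_vertices_if_in_all_past_windows:
  assumes "\<forall>k. x \<in> past_window y j k"
  shows "x \<in> past_vertices y j"
proof -
  let ?P = "\<lambda>n u. (\<forall>k. u \<in> past_window y (j - int n) k) \<and> (n = 0 \<longrightarrow> u = x)"
  let ?Q = "\<lambda>n u u'. has_edge u' (y (j - int n - 1)) u"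
  obtain f where f: "\<forall>n. ?P n (f n) \<and> ?Q n (f n) (f (Suc n))"
  proof (rule dependent_nat_choice[of ?P ?Q, THEN exE])
    show "\<exists>u. ?P 0 u"
      using assms by simp
    show "\<exists>u'. ?P (Suc n) u' \<and> ?Q n u u'" if "?P n u" for u n
      using past_window_backward[of u y "j - int n - 1"] that by (auto simp: algebra_simps)
  qed blast
  define v where "v i = f (nat (j - i))" for i
  have "has_edge (v i) (y i) (v (i + 1))" if "i < j" for i
  proof -
    have "nat (j - i) = Suc (nat (j - i - 1))" "j - int (nat (j - i - 1)) - 1 = i"
      using that by simp_all
    then show ?thesis
      unfolding v_def using f by (metis diff_diff_eq)
  qed
  moreover have "v j = x"
    unfolding v_def using f by simp
  ultimately show ?thesis
    unfolding past_vertices_def by blast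
qed

lemma H2_edges_subset: "H2_edges V E s t L \<subseteq> subset_edges V E s t L"
  unfolding H2_edges_def by (rule trimmed_edges_subset)

lemma subset_edgeD:
  assumes "e \<in> subset_edges V E s t L"
  shows "ss_src e \<subseteq> {s e' |e'. e' \<in> E \<and> L e' = ss_lab e}"
    and "ss_tgt e = follow (ss_src e) (ss_lab e)"
  using assms unfolding subset_edges_def follow_def by (auto simp: ss_src_def ss_tgt_def ss_lab_def)

lemma subset_path_follow_word:
  assumes z: "z \<in> edge_shift D ss_src ss_tgt" and D: "D \<subseteq> subset_edges V E s t L"
  shows "admissible (ss_src (z i)) (block (ss_lab \<circ> z) i m) \<and>
         follow_word (ss_src (z i)) (block (ss_lab \<circ> z) i m) = ss_src (z (i + int m))"
proof (induction m)
  case (Suc m)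
  have "z (i + int m) \<in> subset_edges V E s t L" "ss_tgt (z (i + int m)) = ss_src (z (i + int m + 1))"
    using z D unfolding edge_shift_def by auto
  then show ?case
    using Suc subset_edgeD[of "z (i + int m)"]
    by (simp add: block_Suc admissible_append follow_word_snoc ac_simps)
qed (simp add: block_def)

lemma admissible_word_if_reachable:
  assumes "(a, b) \<in> (edge_rel D ss_src ss_tgt)\<^sup>*" and "D \<subseteq> subset_edges V E s t L"
  shows "\<exists>w. admissible a w \<and> follow_word a w = b"
  using assms(1)
proof (induction rule: rtrancl_induct)
  case base
  show ?case by (intro exI[of _ "[]"]) simp
next
  case (step b c)
  then obtain w where w: "admissible a w" "follow_word a w = b"
    by blast
  obtain e where e: "e \<in> D" "b = ss_src e" "c = ss_tgt e"
    using step(2) unfolding edge_rel_def by blast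
  then have "admissible a (w @ [ss_lab e]) \<and> follow_word a (w @ [ss_lab e]) = c"
    using w subset_edgeD[of e] assms(2) by (auto simp: admissible_append follow_word_snoc)
  then show ?case by blast
qed

lemma beta_F_admissible: "beta_F E s t L y i \<subseteq> {s e |e. e \<in> E \<and> L e = y i}"
proof
  fix x assume "x \<in> beta_F E s t L y i"
  then obtain v where "v i = x" "has_edge (v i) (y i) (v (i + 1))"
    unfolding beta_F_eq_vertex_paths by blast
  then show "x \<in> {s e |e. e \<in> E \<and> L e = y i}"
    unfolding has_edge_def by force
qed

lemma beta_F_nonempty: "y \<in> label_shift E s t L \<Longrightarrow> beta_F E s t L y i \<noteq> {}"
  unfolding label_shift_def beta_F_def by blast

lemma beta_in_H2_shift:
  assumes y: "y \<in> label_shift E s t L"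
  shows "beta E s t L y \<in> edge_shift (H2_edges V E s t L) ss_src ss_tgt"
proof -
  have F_vert: "beta_F E s t L y i \<in> subset_verts V" for i
    using beta_F_nonempty[OF y] beta_F_admissible edge_ends_in_V
    unfolding subset_verts_def by blast
  have "beta E s t L y i \<in> subset_edges V E s t L" for i
    using F_vert[of i] F_vert[of "i + 1"] beta_F_admissible[of y i] beta_F_Suc[of y i]
    unfolding beta_def subset_edges_def follow_def by simp
  then have "beta E s t L y \<in> edge_shift (subset_edges V E s t L) ss_src ss_tgt"
    unfolding edge_shift_def beta_def ss_src_def ss_tgt_def by simp
  then show ?thesis
    unfolding H2_edges_def
    by (rule edge_shift_trimmed) (simp add: F_vert beta_def ss_src_def)
qed

lemma past_vertices_splice_at: "past_vertices (splice_at y N p ws) p = past_vertices y N"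
  using past_vertices_shift[OF splice_at_before] by simp

lemma future_vertices_splice_at:
  "future_vertices (splice_at y N p ws) (p + int (length ws)) = future_vertices y N"
  using future_vertices_shift[OF splice_at_after] by simp

lemma past_window_splice_at:
  "past_window (splice_at y N p (u @ block y (N - int k) k)) (p + int (length u) + int k) k
     = past_window y N k"
  using block_splice_at_append[where u = u and w = "block y (N - int k) k" and z = "[]" and y = y and N = N and p = p]
  unfolding past_window_def by simp

lemma beta_F_splice_at_superset:
  fixes y :: "int \<Rightarrow> 'a" and N :: int
  defines "F \<equiv> beta_F E s t L y N"
  assumes "follow_word F \<rho> = F" "admissible F \<tau>" "follow_word F \<tau> = F"
  shows "F \<subseteq> beta_F E s t L (splice_at y N p (\<rho> @ \<tau>)) (p + int (length \<rho>))"
proof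
  fix f assume "f \<in> F"
  define y' where "y' = splice_at y N p (\<rho> @ \<tau>)"
  have F_past_future: "F \<subseteq> past_vertices y N" "F \<subseteq> future_vertices y N"
    unfolding F_def beta_F_eq_past_future by auto
  have "f \<in> follow_word (past_vertices y' p) (block y' p (length \<rho>))"
    using \<open>f \<in> F\<close> assms(2) follow_word_mono[OF F_past_future(1), of \<rho>] past_vertices_splice_at
      block_splice_at_append[where u = "[]" and w = \<rho> and z = \<tau>] unfolding y'_def by auto
  then have "f \<in> past_vertices y' (p + int (length \<rho>))"
    using follow_word_past_vertices by blast
  moreover obtain z where "z \<in> follow_word {f} \<tau>"
    using admissible_follow_word_nonempty[OF assms(3) \<open>f \<in> F\<close>] by blast
  then have "z \<in> follow_word {f} (block y' (p + int (length \<rho>)) (length \<tau>))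
      \<inter> future_vertices y' (p + int (length \<rho>) + int (length \<tau>))"
    using follow_word_mono[of "{f}" F] \<open>f \<in> F\<close> assms(4) F_past_future(2)
      future_vertices_splice_at[of y N p "\<rho> @ \<tau>"] block_splice_at_append[where u = \<rho> and w = \<tau> and z = "[]"]
    unfolding y'_def by (auto simp: add.assoc)
  then have "f \<in> future_vertices y' (p + int (length \<rho>))"
    by (intro future_vertices_if_follow_word) blast
  ultimately show "f \<in> beta_F E s t L y' (p + int (length \<rho>))"
    unfolding beta_F_eq_past_future by blast
qed

text \<open>A vertex outside \<open>F\<close> at the junction would be merged into \<open>F\<close> by \<open>\<sigma> @ v\<close>, so the loop
  \<open>\<rho> @ \<sigma> @ v\<close> would have smaller rank on the window \<open>D\<close> than the minimal loop \<open>\<rho>\<close>.\<close>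
lemma beta_F_splice_at_subset:
  fixes y :: "int \<Rightarrow> 'a" and N :: int and k :: nat
  defines "F \<equiv> beta_F E s t L y N" and "D \<equiv> past_window y N k" and "v \<equiv> block y (N - int k) k"
  assumes y: "y \<in> label_shift E s t L"
    and window: "D \<subseteq> past_vertices y N"
    and rho: "admissible F \<rho>" "follow_word F \<rho> = F"
    and rho_min: "\<And>\<rho>'. admissible F \<rho>' \<Longrightarrow> follow_word F \<rho>' = F \<Longrightarrow>
                    card (follow_word D \<rho>) \<le> card (follow_word D \<rho>')"
    and sigma: "admissible F (\<sigma> @ v)" "follow_word F (\<sigma> @ v) = F"
  shows "beta_F E s t L (splice_at y N p (\<rho> @ \<sigma> @ v)) (p + int (length \<rho>)) \<subseteq> F"
proof -
  define y' where "y' = splice_at y N p (\<rho> @ \<sigma> @ v)"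
  define q where "q = p + int (length \<rho>)"
  define r where "r = p + int (length (\<rho> @ \<sigma> @ v))"
  have F_past: "F \<subseteq> past_vertices y N"
    unfolding F_def beta_F_eq_past_future by auto
  have "beta_F E s t L y' q = follow_word (beta_F E s t L y' p) \<rho>"
    using beta_F_add[of y' p "length \<rho>"] block_splice_at_append[where u = "[]" and w = \<rho> and z = "\<sigma> @ v"]
    unfolding q_def y'_def by simp
  also have "\<dots> \<subseteq> follow_word (past_vertices y N) \<rho>"
    using past_vertices_splice_at[of y N p] unfolding y'_def beta_F_eq_past_future
    by (intro follow_word_mono) auto
  also have "\<dots> \<subseteq> follow_word D \<rho>"
    unfolding D_def by (intro follow_word_mono past_vertices_subset_past_window)
  finally have junction: "beta_F E s t L y' q \<subseteq> follow_word D \<rho>" .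
  have "past_window y' r k = D"
    using past_window_splice_at[where u = "\<rho> @ \<sigma>"] unfolding y'_def r_def D_def v_def by (simp add: add.assoc)
  moreover have "follow_word (beta_F E s t L y' q) (\<sigma> @ v) = beta_F E s t L y' r"
    using beta_F_add[of y' q "length (\<sigma> @ v)"] block_splice_at_append[where u = \<rho> and w = "\<sigma> @ v" and z = "[]"]
    unfolding y'_def q_def r_def by (simp add: add.assoc)
  ultimately have "follow_word (beta_F E s t L y' q) (\<sigma> @ v) \<subseteq> D \<inter> future_vertices y N"
    using past_vertices_subset_past_window future_vertices_splice_at[of y N p]
    unfolding beta_F_eq_past_future y'_def r_def by blast
  also have "\<dots> \<subseteq> follow_word F (\<sigma> @ v)"
    using window sigma(2) unfolding F_def beta_F_eq_past_future by blast
  finally have merged: "follow_word (beta_F E s t L y' q) (\<sigma> @ v) \<subseteq> follow_word F (\<sigma> @ v)" .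
  show ?thesis
    unfolding y'_def[symmetric] q_def[symmetric]
  proof (rule subset_if_card_follow_word_ge[OF _ _ _ _ junction merged])
    show "finite (follow_word D \<rho>)"
      unfolding D_def by (intro finite_follow_word finite_past_window)
    show "F \<subseteq> follow_word D \<rho>"
      using rho(2) follow_word_mono[of F D \<rho>] F_past past_vertices_subset_past_window
      unfolding D_def by blast
    show "F \<noteq> {}"
      unfolding F_def using beta_F_nonempty[OF y] .
    show "card (follow_word D \<rho>) \<le> card (follow_word (follow_word D \<rho>) (\<sigma> @ v))"
      using rho_min[of "\<rho> @ \<sigma> @ v"] rho sigma by (simp add: admissible_append follow_word_append)
  qed
qed

lemma beta_F_follow_block:
  assumes "y \<in> label_shift E s t L"
  shows "admissible (beta_F E s t L y i) (block y i m) \<and>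
         follow_word (beta_F E s t L y i) (block y i m) = beta_F E s t L y (i + int m)"
proof -
  have "beta E s t L y \<in> edge_shift (subset_edges V E s t L) ss_src ss_tgt"
    using beta_in_H2_shift[OF assms] edge_shift_mono[OF H2_edges_subset] by blast
  moreover have "ss_src \<circ> beta E s t L y = beta_F E s t L y" "ss_lab \<circ> beta E s t L y = y"
    by (auto simp: beta_def ss_src_def ss_lab_def)
  ultimately show ?thesis
    using subset_path_follow_word[of "beta E s t L y" "subset_edges V E s t L" i m]
    by (simp add: comp_def fun_eq_iff)
qed

lemma beta_agrees_with_subset_path:
  assumes y: "y \<in> label_shift E s t L"
    and w: "w \<in> edge_shift D ss_src ss_tgt" "D \<subseteq> subset_edges V E s t L"
    and start: "beta_F E s t L y a = ss_src (w a)"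
    and labels: "block y a m = block (ss_lab \<circ> w) a m"
  shows "\<forall>i. a \<le> i \<and> i < a + int m \<longrightarrow> beta E s t L y i = w i"
proof (intro allI impI)
  fix i assume i: "a \<le> i \<and> i < a + int m"
  define j where "j = nat (i - a)"
  have j: "i = a + int j" "j < m"
    using i unfolding j_def by auto
  have src: "beta_F E s t L y (a + int j') = ss_src (w (a + int j'))" if "j' \<le> m" for j'
  proof -
    have "block y a j' = block (ss_lab \<circ> w) a j'"
      using labels take_block[OF that] by metis
    then show ?thesis
      using beta_F_follow_block[OF y, of a j'] subset_path_follow_word[OF w, of a j'] start by simp
  qed
  have "y i = ss_lab (w i)"
    using arg_cong[OF labels, of "\<lambda>xs. xs ! j"] j by simp
  moreover have "beta_F E s t L y (i + 1) = ss_tgt (w i)"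
    using src[of "Suc j"] j w(1) unfolding edge_shift_def by (simp add: ac_simps)
  ultimately show "beta E s t L y i = w i"
    using src[of j] j unfolding beta_def ss_src_def ss_lab_def ss_tgt_def by simp
qed

lemma exists_splice_at_fixing_beta_F:
  fixes y :: "int \<Rightarrow> 'a" and N :: int
  defines "F \<equiv> beta_F E s t L y N"
  assumes y: "y \<in> label_shift E s t L"
  shows "\<exists>k \<rho>. \<forall>\<sigma> p. admissible F (\<sigma> @ block y (N - int k) k) \<longrightarrow>
           follow_word F (\<sigma> @ block y (N - int k) k) = F \<longrightarrow>
           beta_F E s t L (splice_at y N p (\<rho> @ \<sigma> @ block y (N - int k) k)) (p + int (length \<rho>)) = F"
proof -
  obtain k where "\<forall>k'. past_window y N k \<subseteq> past_window y N k'"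
    using past_window_stabilizes by blast
  then have window: "past_window y N k \<subseteq> past_vertices y N"
    using past_vertices_if_in_all_past_windows by blast
  obtain \<rho> where \<rho>: "admissible F \<rho>" "follow_word F \<rho> = F"
    and \<rho>_min: "\<And>\<rho>'. admissible F \<rho>' \<Longrightarrow> follow_word F \<rho>' = F \<Longrightarrow>
        card (follow_word (past_window y N k) \<rho>) \<le> card (follow_word (past_window y N k) \<rho>')"
    using ex_has_least_nat[of "\<lambda>\<rho>. admissible F \<rho> \<and> follow_word F \<rho> = F" "[]"
        "\<lambda>\<rho>. card (follow_word (past_window y N k) \<rho>)"] by auto
  show ?thesis
    using beta_F_splice_at_subset[OF y window \<rho>[unfolded F_def] \<rho>_min[unfolded F_def]]
      beta_F_splice_at_superset[OF \<rho>(2)[unfolded F_def]]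
    unfolding F_def by blast
qed

lemma approximate_by_beta:
  assumes y: "y \<in> label_shift E s t L"
    and connected: "\<And>a b. a \<in> C \<Longrightarrow> b \<in> C \<Longrightarrow> \<exists>w. admissible a w \<and> follow_word a w = b"
    and past_in_C: "\<And>i. i \<le> N \<Longrightarrow> beta_F E s t L y i \<in> C"
    and w: "w \<in> edge_shift (H2_edges V E s t L) ss_src ss_tgt" "\<And>i. ss_src (w i) \<in> C"
  shows "\<exists>y'\<in>label_shift E s t L. \<forall>i. - int n \<le> i \<and> i \<le> int n \<longrightarrow> beta E s t L y' i = w i"
proof -
  define F where "F = beta_F E s t L y"
  obtain k \<rho> where splice: "\<And>\<sigma> p. admissible (F N) (\<sigma> @ block y (N - int k) k) \<Longrightarrow>
      follow_word (F N) (\<sigma> @ block y (N - int k) k) = F N \<Longrightarrow>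
      beta_F E s t L (splice_at y N p (\<rho> @ \<sigma> @ block y (N - int k) k)) (p + int (length \<rho>)) = F N"
    using exists_splice_at_fixing_beta_F[OF y, of N] unfolding F_def by blast
  define v where "v = block y (N - int k) k"
  define \<gamma> where "\<gamma> = block (ss_lab \<circ> w) (- int n) (2 * n + 1)"
  have \<gamma>: "admissible (ss_src (w (- int n))) \<gamma>" "follow_word (ss_src (w (- int n))) \<gamma> = ss_src (w (int n + 1))"
    using subset_path_follow_word[OF w(1) H2_edges_subset, of "- int n" "2 * n + 1"]
    unfolding \<gamma>_def by (simp_all add: ac_simps)
  obtain \<alpha> where \<alpha>: "admissible (F N) \<alpha>" "follow_word (F N) \<alpha> = ss_src (w (- int n))"
    using connected[OF past_in_C[of N] w(2)] unfolding F_def by auto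
  obtain \<beta> where \<beta>: "admissible (ss_src (w (int n + 1))) \<beta>" "follow_word (ss_src (w (int n + 1))) \<beta> = F (N - int k)"
    using connected[OF w(2) past_in_C[of "N - int k"]] unfolding F_def by auto
  have "admissible (F (N - int k)) v" "follow_word (F (N - int k)) v = F N"
    using beta_F_follow_block[OF y, of "N - int k" k] unfolding F_def v_def by simp_all
  then have "admissible (F N) ((\<alpha> @ \<gamma> @ \<beta>) @ v)" "follow_word (F N) ((\<alpha> @ \<gamma> @ \<beta>) @ v) = F N"
    using \<alpha> \<beta> \<gamma> by (simp_all add: admissible_append follow_word_append)
  moreover define p where "p = - int n - int (length \<alpha>) - int (length \<rho>)"
  moreover define y' where "y' = splice_at y N p (\<rho> @ (\<alpha> @ \<gamma> @ \<beta>) @ v)"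
  ultimately have junction: "beta_F E s t L y' (p + int (length \<rho>)) = F N"
    using splice unfolding v_def by blast
  then have y': "y' \<in> label_shift E s t L"
    using beta_F_nonempty[OF y] label_shift_if_beta_F_nonempty unfolding F_def by metis
  have "block y' (p + int (length \<rho>)) (length \<alpha>) = \<alpha>"
    using block_splice_at_append[where u = \<rho> and w = \<alpha> and z = "\<gamma> @ \<beta> @ v"] unfolding y'_def by simp
  then have "beta_F E s t L y' (- int n) = ss_src (w (- int n))"
    using beta_F_follow_block[OF y', of "p + int (length \<rho>)" "length \<alpha>"] junction \<alpha>(2)
    unfolding p_def by simp
  moreover have "block y' (- int n) (2 * n + 1) = \<gamma>"
    using block_splice_at_append[where u = "\<rho> @ \<alpha>" and w = \<gamma> and z = "\<beta> @ v" and p = p]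
    unfolding y'_def p_def \<gamma>_def by (simp add: algebra_simps)
  ultimately have "\<forall>i. - int n \<le> i \<and> i < - int n + int (2 * n + 1) \<longrightarrow> beta E s t L y' i = w i"
    unfolding \<gamma>_def by (intro beta_agrees_with_subset_path[OF y' w(1) H2_edges_subset])
  then show ?thesis
    using y' by force
qed

end

theorem lemma4p4:
  fixes V :: "'v set" and E :: "'e set" and s t :: "'e \<Rightarrow> 'v" and L :: "'e \<Rightarrow> 'a"
    and C :: "'v set set" and y :: "int \<Rightarrow> 'a"
  assumes "finite_graph_no_sinks_sources V E s t"
    and "right_resolving E s L"
    and "is_component (H2_edges V E s t L) ss_src ss_tgt C"
    and "y \<in> label_shift E s t L"
    and "backward_asymptotic (beta E s t L y) (component_shift (H2_edges V E s t L) ss_src ss_tgt C)"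
  shows "component_shift (H2_edges V E s t L) ss_src ss_tgt C
           \<subseteq> shift_closure (H2_edges V E s t L) ss_src ss_tgt (beta E s t L ` label_shift E s t L)"
proof
  interpret right_resolving_graph V E s t L
    using assms(1,2) by unfold_locales
  obtain u N where u: "u \<in> component_shift (H2_edges V E s t L) ss_src ss_tgt C"
    "\<forall>i\<le>N. beta E s t L y i = u i"
    using assms(5) unfolding backward_asymptotic_def by blast
  have past_in_C: "beta_F E s t L y i \<in> C" if "i \<le> N" for i
    using component_shift_memD[OF u(1)] u(2) that by (metis beta_def ss_src_def fst_conv)
  have connected: "\<exists>w. admissible a w \<and> follow_word a w = b" if "a \<in> C" "b \<in> C" for a b
    using component_reachable[OF assms(3) that] H2_edges_subset by (rule admissible_word_if_reachable)
  fix w assume "w \<in> component_shift (H2_edges V E s t L) ss_src ss_tgt C"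
  then have w: "w \<in> edge_shift (H2_edges V E s t L) ss_src ss_tgt" "\<And>i. ss_src (w i) \<in> C"
    using component_shift_memD by blast+
  show "w \<in> shift_closure (H2_edges V E s t L) ss_src ss_tgt (beta E s t L ` label_shift E s t L)"
  proof (rule in_shift_closure_if_approximable[OF w(1)])
    show "beta E s t L ` label_shift E s t L \<subseteq> edge_shift (H2_edges V E s t L) ss_src ss_tgt"
      using beta_in_H2_shift by blast
    show "\<exists>z\<in>beta E s t L ` label_shift E s t L. \<forall>i. - int n \<le> i \<and> i \<le> int n \<longrightarrow> z i = w i" for n
      using approximate_by_beta[OF assms(4) connected past_in_C w] by blast
  qed
qed

end
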